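(* Let $m\in\mathbb{N}$, $A=\langle a\rangle\le\mathrm{Sym}(3)$ with $a=(1\,2\,3)$, $B=(\mathbb{Z}/3\mathbb{Z})^m$, and let $\omega=\omega_0\omega_1\dots$ be a sequence of epimorphisms $\omega_i\colon B\to A$ with $\bigcap_{i\ge k}\ker(\omega_i)=\{1\}$ for all $k\in\mathbb{N}$. Let $g\in G_\omega$ with $|g|_\omega=n\ge 1$, written as $g=\beta_1^{a^{c_1}}\beta_2^{a^{c_2}}\cdots\beta_n^{a^{c_n}}a^{s}$ with $s\in\mathbb{Z}/3\mathbb{Z}$, $\beta\colon\{1,\dots,n\}\to B_\omega$ and $c\colon\{1,\dots,n\}\to\mathbb{Z}/3\mathbb{Z}$. If $g\in\mathcal{I}_\infty^\omega$, then there exists $m_c\in\{1,2,\dots,n\}$ such that for all $k\in\{1,\dots,n-1\}$, $c_{k+1}-c_k=2$ if $k<m_c$ and $c_{k+1}-c_k=1$ if $k\ge m_c$.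
   Context: $T_3$ is the $3$-regular rooted tree; elements of $\mathrm{Sym}(3)$ act as rooted automorphisms $\tau(xw)=\tau(x)w$; for $g$ fixing the first level, $g=(g_1,g_2,g_3)$ lists the restrictions of $g$ to the three subtrees below the root, and every automorphism is uniquely $(g_1,g_2,g_3)\tau$ with $\tau\in\mathrm{Sym}(3)$. For $b\in B_\omega$ and $i\in\mathbb{Z}/3\mathbb{Z}$, $b^{a^i}=a^iba^{-i}$. Let $\sigma$ be the left shift on sequences. Define recursively $\beta_\omega\colon B\to\mathrm{Aut}(T_3)$ by $\beta_\omega(b)=(\omega_0(b),1,\beta_{\sigma(\omega)}(b))$, $B_\omega=\beta_\omega(B)$, $G_\omega=\langle A,B_\omega\rangle$. The word pseudonorm $|\cdot|_\omega$ on $G_\omega$ gives length $0$ to elements of $A$ and length $1$ to nontrivial elements of $B_\omega$ ($|g|_\omega$ = minimal total length of an expression of $g$ as a product of such generators). Incompressible elements: $\mathcal{I}_0^{\sigma^\nu(\omega)}=G_{\sigma^\nu(\omega)}$; $\mathcal{I}_k^{\sigma^\nu(\omega)}$ is the set of $g=(g_1,g_2,g_3)\tau\in G_{\sigma^\nu(\omega)}$ with $g_i\in\mathcal{I}_{k-1}^{\sigma^{\nu+1}(\omega)}$ and $\sum_i|g_i|_{\sigma^{\nu+1}(\omega)}=|g|_{\sigma^\nu(\omega)}$; $\mathcal{I}_\infty^\omega=\bigcap_{k\ge1}\mathcal{I}_k^\omega$. *)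

theory Defs
  imports "HOL-Algebra.Coset"
begin

text \<open>Vertices of the 3-regular rooted tree T_3 are words over the letters 0,1,2
  (letter i+1 of the paper is letter i here), represented as nat lists. Automorphisms are
  represented as functions nat list => nat list acting on the left (composition is (\<circ>));
  all the maps below fix words containing letters >= 3, so this is only a representation.\<close>

type_synonym tmap = "nat list \<Rightarrow> nat list"

fun arot :: tmap where
  "arot [] = []"
| "arot (x # w) = (if x < 3 then (x + 1) mod 3 else x) # w"

definition apow :: "int \<Rightarrow> tmap" where
  "apow i = arot ^^ nat (i mod 3)"

definition Aset :: "tmap set" where
  "Aset = {arot ^^ j | j. j < 3}"

definition Agrp :: "tmap monoid" where
  "Agrp = \<lparr>carrier = Aset, mult = (\<circ>), one = id\<rparr>"

definition Bgrp :: "nat \<Rightarrow> (nat \<Rightarrow> int) monoid" where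
  "Bgrp m = \<lparr>carrier = {v. \<forall>j. 0 \<le> v j \<and> v j < 3 \<and> (m \<le> j \<longrightarrow> v j = 0)},
             mult = (\<lambda>u v j. (u j + v j) mod 3), one = (\<lambda>_. 0)\<rparr>"

definition shift :: "(nat \<Rightarrow> 'a) \<Rightarrow> nat \<Rightarrow> 'a" where
  "shift \<omega> = (\<lambda>i. \<omega> (Suc i))"

fun beta :: "(nat \<Rightarrow> 'b \<Rightarrow> tmap) \<Rightarrow> 'b \<Rightarrow> tmap" where
  "beta \<omega> b [] = []"
| "beta \<omega> b (x # w) =
     (if x = 0 then 0 # \<omega> 0 b w
      else if x = 2 then 2 # beta (\<lambda>i. \<omega> (Suc i)) b w
      else x # w)"

definition Bw :: "nat \<Rightarrow> (nat \<Rightarrow> (nat \<Rightarrow> int) \<Rightarrow> tmap) \<Rightarrow> tmap set" where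
  "Bw m \<omega> = beta \<omega> ` carrier (Bgrp m)"

inductive_set gen_grp :: "tmap set \<Rightarrow> tmap set" for S where
  gen_id: "id \<in> gen_grp S"
| gen_in: "x \<in> S \<Longrightarrow> x \<in> gen_grp S"
| gen_mult: "g \<in> gen_grp S \<Longrightarrow> h \<in> gen_grp S \<Longrightarrow> g \<circ> h \<in> gen_grp S"
| gen_inv: "g \<in> gen_grp S \<Longrightarrow> inv_into UNIV g \<in> gen_grp S"

definition Gw :: "nat \<Rightarrow> (nat \<Rightarrow> (nat \<Rightarrow> int) \<Rightarrow> tmap) \<Rightarrow> tmap set" where
  "Gw m \<omega> = gen_grp (Aset \<union> Bw m \<omega>)"

definition wnorm :: "nat \<Rightarrow> (nat \<Rightarrow> (nat \<Rightarrow> int) \<Rightarrow> tmap) \<Rightarrow> tmap \<Rightarrow> nat" where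
  "wnorm m \<omega> g = (LEAST n. \<exists>xs. set xs \<subseteq> Aset \<union> Bw m \<omega> \<and> foldr (\<circ>) xs id = g \<and>
       n = length (filter (\<lambda>x. x \<in> Bw m \<omega> \<and> x \<noteq> id) xs))"

text \<open>Sections: g = (g_0,g_1,g_2) tau, i.e. g(x w) = tau(x) g_{tau(x)}(w).\<close>
definition sect :: "tmap \<Rightarrow> nat \<Rightarrow> tmap" where
  "sect g i = (\<lambda>w. tl (g (hd (inv_into UNIV g [i]) # w)))"

fun incompr :: "nat \<Rightarrow> (nat \<Rightarrow> (nat \<Rightarrow> int) \<Rightarrow> tmap) \<Rightarrow> nat \<Rightarrow> tmap \<Rightarrow> bool" where
  "incompr m \<omega> 0 g = (g \<in> Gw m \<omega>)"
| "incompr m \<omega> (Suc k) g =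
     (g \<in> Gw m \<omega> \<and> (\<forall>i<3. incompr m (shift \<omega>) k (sect g i)) \<and>
      (\<Sum>i<3. wnorm m (shift \<omega>) (sect g i)) = wnorm m \<omega> g)"

definition incompr_inf :: "nat \<Rightarrow> (nat \<Rightarrow> (nat \<Rightarrow> int) \<Rightarrow> tmap) \<Rightarrow> tmap \<Rightarrow> bool" where
  "incompr_inf m \<omega> g = (\<forall>k\<ge>1. incompr m \<omega> k g)"

definition conjA :: "int \<Rightarrow> tmap \<Rightarrow> tmap" where
  "conjA i b = apow i \<circ> b \<circ> apow (- i)"

end

theory Submission
  imports Defs
begin

text \<open>If two
  consecutive exponents agree mod 3, the two neighbouring conjugates merge into a single one and
  \<open>|g| < n\<close>; so every step \<open>c (k + 1) - c k\<close> is 1 or 2 mod 3. The section of \<open>g\<close> at a vertex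
  \<open>y\<close> is the product of the sections of the conjugates, and the conjugate with exponent \<open>c\<close>
  contributes a generator of \<open>B\<^bsub>\<sigma>\<omega>\<^esub>\<close> only at the vertex \<open>y \<equiv> c + 2\<close>; hence the norms of
  the three sections add up to at most \<open>n\<close>, and incompressibility forces equality. A step 1
  followed by a step 2 at position \<open>k\<close> puts the conjugates \<open>k\<close> and \<open>k + 2\<close> on the same vertex
  \<open>c k + 2\<close>, separated only by the trivial section of conjugate \<open>k + 1\<close>; they merge and the sum
  drops below \<open>n\<close>. So the steps read \<open>2, \<dots>, 2, 1, \<dots>, 1\<close>.\<close>

lemma id_take_nth_nth_drop:
  "Suc j < length xs \<Longrightarrow> xs = take j xs @ xs ! j # xs ! Suc j # drop (Suc (Suc j)) xs"
  by (simp add: Cons_nth_drop_Suc)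

lemma id_take_nth3_drop:
  "Suc (Suc j) < length xs \<Longrightarrow>
    xs = take j xs @ xs ! j # xs ! Suc j # xs ! Suc (Suc j) # drop (Suc (Suc (Suc j))) xs"
  by (simp add: Cons_nth_drop_Suc)

lemma sum_length_filter_partition:
  assumes "finite I" and "\<forall>x \<in> set xs. \<exists>!i. i \<in> I \<and> P i x"
  shows "(\<Sum>i\<in>I. length (filter (P i) xs)) = length xs"
  using assms(2)
proof (induction xs)
  case (Cons x xs)
  obtain i0 where "{i \<in> I. P i x} = {i0}" using Cons.prems by auto
  then have "(\<Sum>i\<in>I. if P i x then 1 else 0) = (1::nat)"
    using sum.inter_filter[OF assms(1), of "\<lambda>_. 1::nat" "\<lambda>i. P i x", symmetric] by simp
  moreover have "length (filter (P i) (x # xs)) = (if P i x then 1 else 0) + length (filter (P i) xs)"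
    for i by simp
  ultimately show ?case using Cons by (simp only: sum.distrib) simp
qed simp

lemma arot_funpow_Cons: "(arot ^^ j) (x # w) = (if x < 3 then (x + j) mod 3 else x) # w"
  by (induction j) (auto simp: mod_Suc_eq)

lemma arot_funpow_Nil [simp]: "(arot ^^ j) [] = []"
  by (induction j) auto

lemma apow_Cons: "apow i (x # w) = (if x < 3 then nat ((int x + i) mod 3) else x) # w"
proof -
  have "int ((x + nat (i mod 3)) mod 3) = (int x + i) mod 3"
    by (simp add: zmod_int mod_add_right_eq)
  then have "(x + nat (i mod 3)) mod 3 = nat ((int x + i) mod 3)" by linarith
  then show ?thesis by (simp add: apow_def arot_funpow_Cons)
qed

lemma apow_Nil [simp]: "apow i [] = []"
  by (simp add: apow_def)

lemma apow_cong_mod: "i mod 3 = j mod 3 \<Longrightarrow> apow i = apow j"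
  by (simp add: apow_def)

lemma apow_eq_id: "i mod 3 = 0 \<Longrightarrow> apow i = id"
  by (simp add: apow_def)

lemma apow_add: "apow i \<circ> apow j = apow (i + j)"
proof
  fix w
  show "(apow i \<circ> apow j) w = apow (i + j) w"
  proof (cases w)
    case (Cons x v)
    have "nat ((int (nat ((int x + j) mod 3)) + i) mod 3) = nat ((int x + (i + j)) mod 3)"
      by (simp add: mod_add_right_eq add_ac)
    then show ?thesis by (simp add: Cons apow_Cons nat_less_iff)
  qed simp
qed

lemma unique_residue_two: "\<exists>!i. i < (3::nat) \<and> (int i - c) mod 3 = 2"
proof
  show "nat ((c + 2) mod 3) < 3 \<and> (int (nat ((c + 2) mod 3)) - c) mod 3 = 2"
    by (simp add: nat_less_iff mod_diff_left_eq)
next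
  fix i assume i: "i < 3 \<and> (int i - c) mod 3 = 2"
  then have "(c + 2) mod 3 = (c + (int i - c)) mod 3" by (metis mod_add_right_eq)
  also have "\<dots> = int i" using i by simp
  finally show "i = nat ((c + 2) mod 3)" by simp
qed

lemma apow_in_Aset: "apow i \<in> Aset"
  unfolding apow_def Aset_def by auto

lemma id_in_Aset: "id \<in> Aset"
  unfolding Aset_def by (intro CollectI exI[of _ 0]) auto

lemma Aset_length: "f \<in> Aset \<Longrightarrow> length (f w) = length w"
  unfolding Aset_def by (cases w) (auto simp: arot_funpow_Cons)

lemma Aset_Int_Bw: "f \<in> Aset \<Longrightarrow> f \<in> Bw m \<omega> \<Longrightarrow> f = id"
proof -
  assume "f \<in> Aset" "f \<in> Bw m \<omega>"
  then obtain j b where j: "f = arot ^^ j" "j < 3" and b: "f = beta \<omega> b"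
    unfolding Aset_def Bw_def by auto
  from b have "hd (f [0]) = 0" by simp
  with j have "j = 0" by (simp add: arot_funpow_Cons)
  with j show ?thesis by simp
qed

lemma Agrp_hom_mult:
  "f \<in> hom (Bgrp m) Agrp \<Longrightarrow> p \<in> carrier (Bgrp m) \<Longrightarrow> q \<in> carrier (Bgrp m)
    \<Longrightarrow> f (p \<otimes>\<^bsub>Bgrp m\<^esub> q) = f p \<circ> f q"
  by (simp add: hom_def Agrp_def)

lemma Agrp_hom_Aset: "f \<in> hom (Bgrp m) Agrp \<Longrightarrow> p \<in> carrier (Bgrp m) \<Longrightarrow> f p \<in> Aset"
  using hom_in_carrier by (fastforce simp: Agrp_def)

lemma Bgrp_mult_closed:
  "p \<in> carrier (Bgrp m) \<Longrightarrow> q \<in> carrier (Bgrp m) \<Longrightarrow> p \<otimes>\<^bsub>Bgrp m\<^esub> q \<in> carrier (Bgrp m)"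
  by (auto simp: Bgrp_def)

lemma beta_comp:
  assumes hom: "\<And>i. \<omega> i \<in> hom (Bgrp m) Agrp"
    and p: "p \<in> carrier (Bgrp m)" and q: "q \<in> carrier (Bgrp m)"
  shows "beta \<omega> p \<circ> beta \<omega> q = beta \<omega> (p \<otimes>\<^bsub>Bgrp m\<^esub> q)"
proof
  fix w show "(beta \<omega> p \<circ> beta \<omega> q) w = beta \<omega> (p \<otimes>\<^bsub>Bgrp m\<^esub> q) w"
    using hom
  proof (induction w arbitrary: \<omega>)
    case (Cons x w)
    have "beta (\<lambda>i. \<omega> (Suc i)) p (beta (\<lambda>i. \<omega> (Suc i)) q w)
        = beta (\<lambda>i. \<omega> (Suc i)) (p \<otimes>\<^bsub>Bgrp m\<^esub> q) w"
      using Cons by simp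
    then show ?case using Agrp_hom_mult[OF Cons.prems p q] by simp
  qed simp
qed

lemma beta_length:
  assumes "\<And>i. \<omega> i \<in> hom (Bgrp m) Agrp" and "p \<in> carrier (Bgrp m)"
  shows "length (beta \<omega> p w) = length w"
  using assms(1)
proof (induction w arbitrary: \<omega>)
  case (Cons x w)
  have "length (beta (\<lambda>i. \<omega> (Suc i)) p w) = length w" using Cons by simp
  then show ?case using Aset_length[OF Agrp_hom_Aset[OF Cons.prems assms(2)]] by simp
qed simp

definition beta_section :: "(nat \<Rightarrow> (nat \<Rightarrow> int) \<Rightarrow> tmap) \<Rightarrow> (nat \<Rightarrow> int) \<Rightarrow> nat \<Rightarrow> tmap" where
  "beta_section \<omega> b z = (if z = 0 then \<omega> 0 b else if z = 2 then beta (shift \<omega>) b else id)"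

lemma beta_Cons: "beta \<omega> b (z # w) = z # beta_section \<omega> b z w"
  by (simp add: beta_section_def shift_def)

lemma beta_section_length:
  assumes "\<And>i. \<omega> i \<in> hom (Bgrp m) Agrp" and "b \<in> carrier (Bgrp m)"
  shows "length (beta_section \<omega> b z w) = length w"
proof -
  have "length (beta (shift \<omega>) b w) = length w"
    using assms by (intro beta_length) (auto simp: shift_def)
  moreover have "length (\<omega> 0 b w) = length w"
    using assms by (intro Aset_length Agrp_hom_Aset)
  ultimately show ?thesis by (simp add: beta_section_def)
qed

lemma conjA_beta_Cons:
  "conjA c (beta \<omega> b) (y # w) =
     (if y < 3 then y # beta_section \<omega> b (nat ((int y - c) mod 3)) w else y # w)"
proof (cases "y < 3")
  case True
  define z where "z = nat ((int y - c) mod 3)"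
  have "z < 3" by (simp add: z_def nat_less_iff)
  moreover have "nat ((int z + c) mod 3) = y"
    using True by (simp add: z_def mod_add_left_eq)
  moreover have "apow (- c) (y # w) = z # w"
    using True by (simp add: z_def apow_Cons)
  ultimately show ?thesis
    using True by (simp add: conjA_def apow_Cons z_def[symmetric] beta_Cons del: beta.simps)
qed (simp add: conjA_def apow_Cons)

definition conj_prod :: "(nat \<Rightarrow> (nat \<Rightarrow> int) \<Rightarrow> tmap) \<Rightarrow> (int \<times> (nat \<Rightarrow> int)) list \<Rightarrow> tmap" where
  "conj_prod \<omega> ps = foldr (\<circ>) (map (\<lambda>(c, b). conjA c (beta \<omega> b)) ps) id"

definition sect_prod ::
    "(nat \<Rightarrow> (nat \<Rightarrow> int) \<Rightarrow> tmap) \<Rightarrow> nat \<Rightarrow> (int \<times> (nat \<Rightarrow> int)) list \<Rightarrow> tmap" where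
  "sect_prod \<omega> y ps = foldr (\<circ>) (map (\<lambda>(c, b). beta_section \<omega> b (nat ((int y - c) mod 3))) ps) id"

lemma conj_prod_Cons:
  "conj_prod \<omega> ps (y # w) = (if y < 3 then y # sect_prod \<omega> y ps w else y # w)"
  by (induction ps) (auto simp: conj_prod_def sect_prod_def conjA_beta_Cons)

lemma conj_prod_Nil [simp]: "conj_prod \<omega> ps [] = []"
  by (induction ps) (auto simp: conj_prod_def conjA_def)

lemma sect_prod_length:
  assumes "\<And>i. \<omega> i \<in> hom (Bgrp m) Agrp" and "\<forall>(c, b) \<in> set ps. b \<in> carrier (Bgrp m)"
  shows "length (sect_prod \<omega> y ps w) = length w"
  using assms(2) by (induction ps) (auto simp: sect_prod_def beta_section_length[OF assms(1)])

lemma sect_rooted: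
  fixes g :: tmap and H :: "nat \<Rightarrow> tmap"
  assumes g_Cons: "\<And>x w. g (x # w) =
      (if x < 3 then nat ((int x + s) mod 3) # H (nat ((int x + s) mod 3)) w else x # w)"
    and g_Nil: "g [] = []" and H_length: "\<And>y w. length (H y w) = length w" and i: "i < 3"
  shows "sect g i = H i"
proof -
  define x0 where "x0 = nat ((int i - s) mod 3)"
  have x0: "x0 < 3" "nat ((int x0 + s) mod 3) = i"
    using i by (simp_all add: x0_def nat_less_iff mod_add_left_eq)
  have g_x0: "g (x0 # w) = i # H i w" for w
    using g_Cons x0 by simp
  have g_length: "length (g x) = length x" for x
    using g_Nil g_Cons H_length by (cases x) auto
  have "inv_into UNIV g [i] = [x0]"
    unfolding inv_into_def
  proof (rule some_equality)
    show "[x0] \<in> UNIV \<and> g [x0] = [i]"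
      using g_x0[of "[]"] H_length[of i "[]"] by simp
  next
    fix x assume "x \<in> UNIV \<and> g x = [i]"
    then have gx: "g x = [i]" by simp
    then have "length x = 1" using g_length[of x] by simp
    then obtain x1 where x: "x = [x1]" by (auto simp: length_Suc_conv)
    show "x = [x0]"
    proof (cases "x1 < 3")
      case True
      then have "(int x1 + s) mod 3 = int i" using gx x g_Cons by auto
      then have "(int i - s) mod 3 = (int x1 + s - s) mod 3" by (metis mod_diff_left_eq)
      then have "int x1 = (int i - s) mod 3" using True by simp
      then show ?thesis using x by (simp add: x0_def)
    qed (use gx x g_Cons i in auto)
  qed
  then show ?thesis by (simp add: sect_def g_x0)
qed

lemma sect_conj_prod_apow:
  assumes "\<And>i. \<omega> i \<in> hom (Bgrp m) Agrp" and "\<forall>(c, b) \<in> set ps. b \<in> carrier (Bgrp m)"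
    and "i < 3"
  shows "sect (conj_prod \<omega> ps \<circ> apow s) i = sect_prod \<omega> i ps"
  by (rule sect_rooted[where s = s])
    (use assms(3) in \<open>simp_all add: apow_Cons conj_prod_Cons nat_less_iff
         sect_prod_length[OF assms(1,2)]\<close>)

lemma conjA_comp_same_exponent:
  assumes "c' mod 3 = c mod 3"
  shows "conjA c x \<circ> conjA c' y = conjA c (x \<circ> y)"
proof -
  have "(- c + c') mod 3 = 0" using assms by presburger
  then have cancel: "apow (- c) \<circ> apow c' = id" by (simp add: apow_add apow_eq_id)
  have "apow (- c') = apow (- c)"
    using assms by (intro apow_cong_mod) presburger
  then have "conjA c x \<circ> conjA c' y = apow c \<circ> x \<circ> (apow (- c) \<circ> apow c') \<circ> y \<circ> apow (- c)"
    by (simp add: conjA_def o_assoc)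
  then show ?thesis by (simp add: cancel conjA_def o_assoc)
qed

definition word_len :: "nat \<Rightarrow> (nat \<Rightarrow> (nat \<Rightarrow> int) \<Rightarrow> tmap) \<Rightarrow> tmap list \<Rightarrow> nat" where
  "word_len m \<omega> xs = length (filter (\<lambda>x. x \<in> Bw m \<omega> \<and> x \<noteq> id) xs)"

lemma word_len_Nil [simp]: "word_len m \<omega> [] = 0"
  by (simp add: word_len_def)

lemma word_len_append [simp]: "word_len m \<omega> (xs @ ys) = word_len m \<omega> xs + word_len m \<omega> ys"
  by (simp add: word_len_def)

lemma word_len_Cons_Aset [simp]: "x \<in> Aset \<Longrightarrow> word_len m \<omega> (x # xs) = word_len m \<omega> xs"
  using Aset_Int_Bw by (auto simp: word_len_def)

lemma word_len_Cons_le: "word_len m \<omega> (x # xs) \<le> Suc (word_len m \<omega> xs)"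
  by (simp add: word_len_def)

lemma wnorm_le_word_len:
  "set xs \<subseteq> Aset \<union> Bw m \<omega> \<Longrightarrow> wnorm m \<omega> (foldr (\<circ>) xs id) \<le> word_len m \<omega> xs"
  unfolding wnorm_def word_len_def by (rule Least_le) blast

lemma wnorm_conj_prod_apow_le:
  assumes "\<forall>(c, b) \<in> set ps. b \<in> carrier (Bgrp m)"
  shows "wnorm m \<omega> (conj_prod \<omega> ps \<circ> apow s) \<le> length ps"
proof -
  define block where "block = (\<lambda>(c, b). [apow c, beta \<omega> b, apow (- c)])"
  define xs where "xs = concat (map block ps) @ [apow s]"
  have "foldr (\<circ>) (concat (map block ps)) f = conj_prod \<omega> ps \<circ> f" for f
    unfolding block_def conj_prod_def by (induction ps) (auto simp: conjA_def o_assoc)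
  from this[of "apow s"] have "conj_prod \<omega> ps \<circ> apow s = foldr (\<circ>) xs id"
    by (simp add: xs_def)
  moreover have "set xs \<subseteq> Aset \<union> Bw m \<omega>"
    using assms by (auto simp: xs_def block_def Bw_def apow_in_Aset)
  moreover have "word_len m \<omega> xs \<le> length ps"
  proof -
    have block_len: "word_len m \<omega> (block p) \<le> 1" for p
      using word_len_Cons_le[of m \<omega> "beta \<omega> (snd p)" "[apow (- fst p)]"]
      by (cases p) (simp add: block_def apow_in_Aset)
    have "word_len m \<omega> (concat (map block ps)) \<le> length ps"
    proof (induction ps)
      case (Cons p ps)
      have "word_len m \<omega> (concat (map block (p # ps)))
          = word_len m \<omega> (block p) + word_len m \<omega> (concat (map block ps))"
        by (simp only: list.map concat.simps word_len_append)
      with Cons block_len[of p] show ?case by simp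
    qed simp
    then show ?thesis by (simp add: xs_def apow_in_Aset)
  qed
  ultimately show ?thesis using wnorm_le_word_len by (metis order.trans)
qed

lemma conj_prod_merge:
  assumes hom: "\<And>i. \<omega> i \<in> hom (Bgrp m) Agrp"
    and "b \<in> carrier (Bgrp m)" "b' \<in> carrier (Bgrp m)" and "c' mod 3 = c mod 3"
  shows "conj_prod \<omega> (pre @ (c, b) # (c', b') # suf) =
    conj_prod \<omega> (pre @ (c, b \<otimes>\<^bsub>Bgrp m\<^esub> b') # suf)"
  using conjA_comp_same_exponent[OF assms(4)] beta_comp[OF assms(1-3)]
  by (simp add: conj_prod_def o_assoc)

lemma beta_section_in_Aset:
  assumes "\<And>i. \<omega> i \<in> hom (Bgrp m) Agrp" and "b \<in> carrier (Bgrp m)" and "z \<noteq> 2"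
  shows "beta_section \<omega> b z \<in> Aset"
  using assms Agrp_hom_Aset[OF assms(1,2)] id_in_Aset by (simp add: beta_section_def)

lemma beta_section_in_generators:
  assumes "\<And>i. \<omega> i \<in> hom (Bgrp m) Agrp" and "b \<in> carrier (Bgrp m)"
  shows "beta_section \<omega> b z \<in> Aset \<union> Bw m (shift \<omega>)"
  using assms(2) beta_section_in_Aset[of \<omega>, OF assms, of z]
  by (cases "z = 2") (auto simp: beta_section_def Bw_def)

lemma wnorm_sect_prod_le:
  assumes hom: "\<And>i. \<omega> i \<in> hom (Bgrp m) Agrp" and carr: "\<forall>(c, b) \<in> set ps. b \<in> carrier (Bgrp m)"
  shows "wnorm m (shift \<omega>) (sect_prod \<omega> i ps) \<le> length (filter (\<lambda>(c, b). (int i - c) mod 3 = 2) ps)"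
proof -
  let ?f = "\<lambda>(c, b). beta_section \<omega> b (nat ((int i - c) mod 3))"
  define xs where "xs = map ?f ps"
  have "?f p \<in> Aset \<union> Bw m (shift \<omega>)" if "p \<in> set ps" for p
    using carr that beta_section_in_generators[of \<omega>, OF hom] by (cases p) force
  then have gen: "set xs \<subseteq> Aset \<union> Bw m (shift \<omega>)" by (auto simp: xs_def)
  have "word_len m (shift \<omega>) xs \<le> length (filter (\<lambda>(c, b). (int i - c) mod 3 = 2) ps)"
    unfolding xs_def using carr
  proof (induction ps)
    case (Cons p ps)
    obtain c b where p: "p = (c, b)" by (cases p)
    show ?case
    proof (cases "(int i - c) mod 3 = 2")
      case True
      have "word_len m (shift \<omega>) (map ?f (p # ps)) \<le> Suc (word_len m (shift \<omega>) (map ?f ps))"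
        unfolding list.map by (rule word_len_Cons_le)
      with Cons True p show ?thesis by simp
    next
      case False
      then have "beta_section \<omega> b (nat ((int i - c) mod 3)) \<in> Aset"
        using Cons.prems p by (intro beta_section_in_Aset[of \<omega>, OF hom]) (auto simp: nat_eq_iff)
      then show ?thesis using Cons False p by simp
    qed
  qed simp
  moreover have "sect_prod \<omega> i ps = foldr (\<circ>) xs id" by (simp add: sect_prod_def xs_def)
  ultimately show ?thesis using wnorm_le_word_len[OF gen] by simp
qed

lemma sect_prod_merge:
  assumes hom: "\<And>i. \<omega> i \<in> hom (Bgrp m) Agrp"
    and "b \<in> carrier (Bgrp m)" "b'' \<in> carrier (Bgrp m)"
    and "(int i - c) mod 3 = 2" "(int i - c') mod 3 = 1" "(int i - c'') mod 3 = 2"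
  shows "sect_prod \<omega> i (pre @ (c, b) # (c', b') # (c'', b'') # suf) =
    sect_prod \<omega> i (pre @ (c, b \<otimes>\<^bsub>Bgrp m\<^esub> b'') # suf)"
proof -
  let ?s = "\<lambda>c b. beta_section \<omega> b (nat ((int i - c) mod 3))"
  have "beta (shift \<omega>) b \<circ> beta (shift \<omega>) b'' = beta (shift \<omega>) (b \<otimes>\<^bsub>Bgrp m\<^esub> b'')"
    using assms(2,3) hom by (intro beta_comp) (auto simp: shift_def)
  then have merge: "?s c b \<circ> (?s c' b' \<circ> (?s c'' b'' \<circ> r)) = ?s c (b \<otimes>\<^bsub>Bgrp m\<^esub> b'') \<circ> r" for r
    using assms(4-6) by (simp add: beta_section_def o_assoc)
  show ?thesis by (simp add: sect_prod_def merge)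
qed

lemma conj_prod_exponent_steps_nonzero:
  assumes hom: "\<And>i. \<omega> i \<in> hom (Bgrp m) Agrp" and carr: "\<forall>(c, b) \<in> set ps. b \<in> carrier (Bgrp m)"
    and norm: "wnorm m \<omega> (conj_prod \<omega> ps \<circ> apow s) = length ps" and j: "Suc j < length ps"
  shows "(fst (ps ! Suc j) - fst (ps ! j)) mod 3 \<noteq> 0"
proof
  assume step: "(fst (ps ! Suc j) - fst (ps ! j)) mod 3 = 0"
  obtain c b c' b' where p: "ps ! j = (c, b)" "ps ! Suc j = (c', b')" by fastforce
  define pre suf where "pre = take j ps" and "suf = drop (Suc (Suc j)) ps"
  have ps: "ps = pre @ (c, b) # (c', b') # suf"
    using id_take_nth_nth_drop[OF j] p by (simp add: pre_def suf_def)
  have bb': "b \<in> carrier (Bgrp m)" "b' \<in> carrier (Bgrp m)"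
    using carr by (auto simp: ps)
  have "c' mod 3 = c mod 3" using step p by (simp add: mod_eq_dvd_iff dvd_eq_mod_eq_0)
  then have "conj_prod \<omega> ps = conj_prod \<omega> (pre @ (c, b \<otimes>\<^bsub>Bgrp m\<^esub> b') # suf)"
    unfolding ps using bb' by (intro conj_prod_merge[OF hom])
  moreover have "\<forall>(c, b) \<in> set (pre @ (c, b \<otimes>\<^bsub>Bgrp m\<^esub> b') # suf). b \<in> carrier (Bgrp m)"
    using carr bb' Bgrp_mult_closed by (auto simp: ps)
  ultimately have "wnorm m \<omega> (conj_prod \<omega> ps \<circ> apow s) \<le> length ps - 1"
    using wnorm_conj_prod_apow_le by (fastforce simp: ps)
  with norm j show False by simp
qed

lemma conj_prod_exponent_steps_not_one_two:
  assumes hom: "\<And>i. \<omega> i \<in> hom (Bgrp m) Agrp" and carr: "\<forall>(c, b) \<in> set ps. b \<in> carrier (Bgrp m)"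
    and sections: "(\<Sum>i<3. wnorm m (shift \<omega>) (sect (conj_prod \<omega> ps \<circ> apow s) i)) = length ps"
    and j: "Suc (Suc j) < length ps"
  shows "\<not> ((fst (ps ! Suc j) - fst (ps ! j)) mod 3 = 1 \<and>
            (fst (ps ! Suc (Suc j)) - fst (ps ! Suc j)) mod 3 = 2)"
proof
  assume steps: "(fst (ps ! Suc j) - fst (ps ! j)) mod 3 = 1 \<and>
    (fst (ps ! Suc (Suc j)) - fst (ps ! Suc j)) mod 3 = 2"
  obtain c b c' b' c'' b'' where p: "ps ! j = (c, b)" "ps ! Suc j = (c', b')"
      "ps ! Suc (Suc j) = (c'', b'')" by fastforce
  define pre suf where "pre = take j ps" and "suf = drop (Suc (Suc (Suc j))) ps"
  have ps: "ps = pre @ (c, b) # (c', b') # (c'', b'') # suf"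
    using id_take_nth3_drop[OF j] p by (simp add: pre_def suf_def)
  have bb'': "b \<in> carrier (Bgrp m)" "b'' \<in> carrier (Bgrp m)"
    using carr by (auto simp: ps)
  let ?hits = "\<lambda>i ps. length (filter (\<lambda>(c, b). (int i - c) mod 3 = 2) ps)"
  let ?w = "\<lambda>i. wnorm m (shift \<omega>) (sect (conj_prod \<omega> ps \<circ> apow s) i)"
  txt \<open>At the vertex \<open>y\<close> the sections of the conjugates \<open>j, j + 1, j + 2\<close> are
    \<open>\<beta>\<^bsub>\<sigma>\<omega>\<^esub>(b), 1, \<beta>\<^bsub>\<sigma>\<omega>\<^esub>(b'')\<close>, so two generators merge into one.\<close>
  define y where "y = nat ((c + 2) mod 3)"
  have y: "y < 3" "(int y - c) mod 3 = 2" "(int y - c') mod 3 = 1" "(int y - c'') mod 3 = 2"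
    using steps p by (simp_all add: y_def nat_less_iff mod_diff_left_eq) presburger+
  have le: "?w i \<le> ?hits i ps" if "i < 3" for i
    using that by (simp add: sect_conj_prod_apow[OF hom carr] wnorm_sect_prod_le[OF hom carr])
  have "?w y < ?hits y ps"
  proof -
    let ?ps' = "pre @ (c, b \<otimes>\<^bsub>Bgrp m\<^esub> b'') # suf"
    have "\<forall>(c, b) \<in> set ?ps'. b \<in> carrier (Bgrp m)"
      using carr bb'' Bgrp_mult_closed by (auto simp: ps)
    then have "wnorm m (shift \<omega>) (sect_prod \<omega> y ?ps') \<le> ?hits y ?ps'"
      by (rule wnorm_sect_prod_le[OF hom])
    moreover have "?hits y ?ps' < ?hits y ps" using y by (simp add: ps)
    moreover have "sect_prod \<omega> y ps = sect_prod \<omega> y ?ps'"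
      unfolding ps using bb'' y by (intro sect_prod_merge[OF hom])
    ultimately show ?thesis using y by (simp add: sect_conj_prod_apow[OF hom carr])
  qed
  then have "(\<Sum>i<3. ?w i) < (\<Sum>i<3. ?hits i ps)"
    using le y by (intro sum_strict_mono_ex1) auto
  also have "\<dots> = length ps"
    by (intro sum_length_filter_partition) (simp_all add: split_beta unique_residue_two)
  finally show False using sections by simp
qed

lemma steps_two_then_one:
  fixes d :: "nat \<Rightarrow> int"
  assumes steps: "\<And>k. 1 \<le> k \<Longrightarrow> k < n \<Longrightarrow> d k = 1 \<or> d k = 2"
    and no_rise: "\<And>k. 1 \<le> k \<Longrightarrow> Suc k < n \<Longrightarrow> \<not> (d k = 1 \<and> d (Suc k) = 2)"
    and n: "n \<ge> 1"
  shows "\<exists>mc\<in>{1..n}. \<forall>k\<in>{1..n-1}. (k < mc \<longrightarrow> d k = 2) \<and> (mc \<le> k \<longrightarrow> d k = 1)"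
proof -
  have ones_persist: "d k' = 1" if "d k = 1" "1 \<le> k" "k \<le> k'" "k' < n" for k k'
    using that(3,4)
  proof (induction k' rule: dec_induct)
    case (step i)
    then show ?case using steps[of "Suc i"] no_rise[of i] that(2) by auto
  qed (use that in simp)
  show ?thesis
  proof (cases "\<exists>k. 1 \<le> k \<and> k < n \<and> d k = 1")
    case True
    define mc where "mc = (LEAST k. 1 \<le> k \<and> k < n \<and> d k = 1)"
    have mc: "1 \<le> mc" "mc < n" "d mc = 1"
      using LeastI_ex[OF True] by (simp_all add: mc_def)
    have "d k = 2" if "1 \<le> k" "k < mc" for k
      using steps[of k] not_less_Least[of k "\<lambda>k. 1 \<le> k \<and> k < n \<and> d k = 1"] that mc(2)
      by (auto simp: mc_def)
    then show ?thesis using mc ones_persist[OF mc(3,1)] by (intro bexI[of _ mc]) auto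
  next
    case False
    then show ?thesis using steps n by (intro bexI[of _ n]) force+
  qed
qed

lemma incompr_inf_sections_wnorm:
  "incompr_inf m \<omega> g \<Longrightarrow> (\<Sum>i<3. wnorm m (shift \<omega>) (sect g i)) = wnorm m \<omega> g"
  using incompr.simps(2)[of m \<omega> 0 g] by (auto simp: incompr_inf_def simp del: incompr.simps)

lemma foldr_conjA_eq_conj_prod:
  assumes "\<forall>k\<in>set ks. \<beta> k = beta \<omega> (b k)"
  shows "foldr (\<circ>) (map (\<lambda>k. conjA (c k) (\<beta> k)) ks) f = conj_prod \<omega> (map (\<lambda>k. (c k, b k)) ks) \<circ> f"
  using assms by (induction ks) (auto simp: conj_prod_def)

theorem mainTheorem3:
  fixes m n :: nat and \<omega> :: "nat \<Rightarrow> (nat \<Rightarrow> int) \<Rightarrow> tmap" and g :: tmap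
    and \<beta> :: "nat \<Rightarrow> tmap" and c :: "nat \<Rightarrow> int" and s :: int
  assumes epi: "\<forall>i. \<omega> i \<in> epi (Bgrp m) Agrp"
    and ker: "\<forall>k. (\<Inter>i\<in>{k..}. kernel (Bgrp m) Agrp (\<omega> i)) = {\<one>\<^bsub>Bgrp m\<^esub>}"
    and gG: "g \<in> Gw m \<omega>"
    and norm: "wnorm m \<omega> g = n" and n1: "n \<ge> 1"
    and \<beta>B: "\<forall>k\<in>{1..n}. \<beta> k \<in> Bw m \<omega>"
    and expr: "g = foldr (\<circ>) (map (\<lambda>k. conjA (c k) (\<beta> k)) [1..<n+1]) (apow s)"
    and inc: "incompr_inf m \<omega> g"
  shows "\<exists>mc\<in>{1..n}. \<forall>k\<in>{1..n-1}.
           (k < mc \<longrightarrow> (c (k+1) - c k) mod 3 = 2) \<and> (mc \<le> k \<longrightarrow> (c (k+1) - c k) mod 3 = 1)"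
proof -
  have hom: "\<And>i. \<omega> i \<in> hom (Bgrp m) Agrp" using epi by (simp add: epi_def)
  have "\<forall>k\<in>{1..n}. \<exists>p. p \<in> carrier (Bgrp m) \<and> \<beta> k = beta \<omega> p"
    using \<beta>B by (auto simp: Bw_def)
  then obtain b where b: "\<forall>k\<in>{1..n}. b k \<in> carrier (Bgrp m) \<and> \<beta> k = beta \<omega> (b k)"
    by metis
  define ps where "ps = map (\<lambda>k. (c k, b k)) [1..<n+1]"
  have carr: "\<forall>(c, b) \<in> set ps. b \<in> carrier (Bgrp m)"
    using b by (auto simp: ps_def simp del: upt_Suc)
  have len: "length ps = n" by (simp add: ps_def)
  have fst_ps: "fst (ps ! j) = c (Suc j)" if "j < n" for j
    using that by (simp add: ps_def del: upt_Suc)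
  have g: "g = conj_prod \<omega> ps \<circ> apow s"
    unfolding expr ps_def using b by (intro foldr_conjA_eq_conj_prod) auto
  have norm': "wnorm m \<omega> (conj_prod \<omega> ps \<circ> apow s) = length ps"
    using norm by (simp only: g len)
  have sections: "(\<Sum>i<3. wnorm m (shift \<omega>) (sect (conj_prod \<omega> ps \<circ> apow s) i)) = length ps"
    using incompr_inf_sections_wnorm[OF inc] norm' by (simp only: g)
  show ?thesis
  proof (rule steps_two_then_one[OF _ _ n1])
    fix k assume k: "1 \<le> k" "k < n"
    have "(c (k + 1) - c k) mod 3 \<noteq> 0"
      using conj_prod_exponent_steps_nonzero[OF hom carr norm', of "k - 1"] k
        fst_ps[of k] fst_ps[of "k - 1"]
      by (simp add: len)
    moreover have "0 \<le> (c (k + 1) - c k) mod 3" "(c (k + 1) - c k) mod 3 < 3" by simp_all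
    ultimately show "(c (k + 1) - c k) mod 3 = 1 \<or> (c (k + 1) - c k) mod 3 = 2" by linarith
  next
    fix k assume k: "1 \<le> k" "Suc k < n"
    show "\<not> ((c (k + 1) - c k) mod 3 = 1 \<and> (c (Suc k + 1) - c (Suc k)) mod 3 = 2)"
      using conj_prod_exponent_steps_not_one_two[OF hom carr sections, of "k - 1"] k
        fst_ps[of "k - 1"] fst_ps[of k] fst_ps[of "Suc k"]
      by (simp add: len)
  qed
qed

end
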